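(* Let $F\colon\mathsf{Set}\to\mathsf{Set}$ preserve intersections, and let $(C,c,i_C)$ be an $I$-pointed $F$-coalgebra. For every $k\in\mathbb N$, the $k$-th step $C_k\subseteq C$ of the construction of the reachable part of $(C,c,i_C)$ coincides with the $k$-th step of the construction of the reachable part of its canonical graph $(C,\tau_C\cdot c,i_C)$, regarded as an $I$-pointed $\mathcal P$-coalgebra.
   Context: On $\mathsf{Set}$ use the factorization system (surjective, injective). $F$ preserves intersections: preserves injective maps and intersections of subsets. For a functor $H$ preserving intersections and a map $f\colon X\to HY$, $\ominus_f(S)$ for $S\subseteq X$ is the least $Z\subseteq Y$ such that $f|_S$ factors through $HZ\to HY$ (image of the inclusion). For an $I$-pointed $H$-coalgebra $(C,d,i_C)$ (with $d\colon C\to HC$, $i_C\colon I\to C$), its $k$-th step is defined by $C_0=i_C[I]$ (the image of $i_C$) and $C_{k+1}=\ominus_d(C_k)$. $\mathcal P$ is the power-set functor. For each set $X$, $\tau_X\colon FX\to\mathcal P X$ is $\tau_X(t)=\{x\in X\mid t\notin Fi[F(X\setminus\{x\})]\}$ with $i\colon X\setminus\{x\}\hookrightarrow X$ the inclusion; $\tau_C\cdot c$ is the canonical graph. *)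

theory Defs
  imports Main "HOL-Library.FuncSet"
begin

text \<open>A set functor, represented on the category of subsets of a universe type 'a:
  Fobj X is the object part, and Fmap X Y f is the action of F on a map f : X \<rightarrow> Y
  (domain and codomain are explicit, so F need not preserve inclusions literally).\<close>

definition set_functor :: "('a set \<Rightarrow> 'b set) \<Rightarrow> ('a set \<Rightarrow> 'a set \<Rightarrow> ('a \<Rightarrow> 'a) \<Rightarrow> 'b \<Rightarrow> 'b) \<Rightarrow> bool" where
  "set_functor Fobj Fmap \<longleftrightarrow>
     (\<forall>X Y f. f \<in> X \<rightarrow> Y \<longrightarrow> Fmap X Y f \<in> Fobj X \<rightarrow> Fobj Y) \<and>
     (\<forall>X Y f g. (\<forall>x\<in>X. f x = g x) \<longrightarrow> (\<forall>t\<in>Fobj X. Fmap X Y f t = Fmap X Y g t)) \<and>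
     (\<forall>X. \<forall>t\<in>Fobj X. Fmap X X id t = t) \<and>
     (\<forall>X Y Z f g. f \<in> X \<rightarrow> Y \<longrightarrow> g \<in> Y \<rightarrow> Z \<longrightarrow>
        (\<forall>t\<in>Fobj X. Fmap X Z (g \<circ> f) t = Fmap Y Z g (Fmap X Y f t)))"

text \<open>Image of F applied to the inclusion Z \<hookrightarrow> X.\<close>
definition Fimg :: "('a set \<Rightarrow> 'b set) \<Rightarrow> ('a set \<Rightarrow> 'a set \<Rightarrow> ('a \<Rightarrow> 'a) \<Rightarrow> 'b \<Rightarrow> 'b) \<Rightarrow> 'a set \<Rightarrow> 'a set \<Rightarrow> 'b set" where
  "Fimg Fobj Fmap Z X = Fmap Z X id ` Fobj Z"

definition preserves_intersections :: "('a set \<Rightarrow> 'b set) \<Rightarrow> ('a set \<Rightarrow> 'a set \<Rightarrow> ('a \<Rightarrow> 'a) \<Rightarrow> 'b \<Rightarrow> 'b) \<Rightarrow> bool" where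
  "preserves_intersections Fobj Fmap \<longleftrightarrow>
     (\<forall>X Y f. f \<in> X \<rightarrow> Y \<and> inj_on f X \<longrightarrow> inj_on (Fmap X Y f) (Fobj X)) \<and>
     (\<forall>X \<Z>. \<Z> \<noteq> {} \<and> (\<forall>Z\<in>\<Z>. Z \<subseteq> X) \<longrightarrow>
        Fimg Fobj Fmap (\<Inter>\<Z>) X = (\<Inter>Z\<in>\<Z>. Fimg Fobj Fmap Z X))"

text \<open>\<ominus>_f(S) for f : X \<rightarrow> H Y: the least Z \<subseteq> Y such that f restricted to S factors through
  H Z \<rightarrow> H Y.\<close>
definition ominus :: "('a set \<Rightarrow> 'b set) \<Rightarrow> ('a set \<Rightarrow> 'a set \<Rightarrow> ('a \<Rightarrow> 'a) \<Rightarrow> 'b \<Rightarrow> 'b)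
     \<Rightarrow> 'a set \<Rightarrow> ('a \<Rightarrow> 'b) \<Rightarrow> 'a set \<Rightarrow> 'a set" where
  "ominus Hobj Hmap Y f S = (LEAST Z. Z \<subseteq> Y \<and> f ` S \<subseteq> Fimg Hobj Hmap Z Y)"

text \<open>k-th step of the reachable-part construction of an I-pointed H-coalgebra (C, d, iC).\<close>
primrec kstep :: "('a set \<Rightarrow> 'b set) \<Rightarrow> ('a set \<Rightarrow> 'a set \<Rightarrow> ('a \<Rightarrow> 'a) \<Rightarrow> 'b \<Rightarrow> 'b)
     \<Rightarrow> 'a set \<Rightarrow> ('a \<Rightarrow> 'b) \<Rightarrow> 'i set \<Rightarrow> ('i \<Rightarrow> 'a) \<Rightarrow> nat \<Rightarrow> 'a set" where
  "kstep Hobj Hmap C d I iC 0 = iC ` I"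
| "kstep Hobj Hmap C d I iC (Suc k) = ominus Hobj Hmap C d (kstep Hobj Hmap C d I iC k)"

definition Pobj :: "'a set \<Rightarrow> 'a set set" where "Pobj X = Pow X"
definition Pmap :: "'a set \<Rightarrow> 'a set \<Rightarrow> ('a \<Rightarrow> 'a) \<Rightarrow> 'a set \<Rightarrow> 'a set" where "Pmap X Y f A = f ` A"

definition tau :: "('a set \<Rightarrow> 'b set) \<Rightarrow> ('a set \<Rightarrow> 'a set \<Rightarrow> ('a \<Rightarrow> 'a) \<Rightarrow> 'b \<Rightarrow> 'b) \<Rightarrow> 'a set \<Rightarrow> 'b \<Rightarrow> 'a set" where
  "tau Fobj Fmap X t = {x \<in> X. t \<notin> Fimg Fobj Fmap (X - {x}) X}"

end

theory Submission
  imports Defs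
begin

text \<open>For an intersection-preserving F, every t \<in> F C has a least support, namely the
  intersection of all Z \<subseteq> C with t \<in> F Z, and this least support is exactly \<tau>_C(t).
  Hence c(s) factors through F Z iff \<tau>_C(c(s)) \<subseteq> Z, so both \<ominus>_c(S) and
  \<ominus>_{\<tau>_C \<cdot> c}(S) equal the union of the sets \<tau>_C(c(s)) for s \<in> S, and the two step
  sequences agree by induction.\<close>

lemma Fimg_Inter:
  assumes "preserves_intersections Fobj Fmap" "\<Z> \<noteq> {}" "\<forall>Z\<in>\<Z>. Z \<subseteq> X"
  shows "Fimg Fobj Fmap (\<Inter>\<Z>) X = (\<Inter>Z\<in>\<Z>. Fimg Fobj Fmap Z X)"
  using assms unfolding preserves_intersections_def by blast

lemma Fimg_mono:
  assumes "preserves_intersections Fobj Fmap" "Z \<subseteq> Z'" "Z' \<subseteq> C"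
  shows "Fimg Fobj Fmap Z C \<subseteq> Fimg Fobj Fmap Z' C"
proof -
  have "Fimg Fobj Fmap (\<Inter>{Z, Z'}) C = Fimg Fobj Fmap Z C \<inter> Fimg Fobj Fmap Z' C"
    using Fimg_Inter[OF assms(1), of "{Z, Z'}" C] assms(2,3) by auto
  moreover have "\<Inter>{Z, Z'} = Z" using assms(2) by auto
  ultimately show ?thesis by auto
qed

lemma Fimg_self:
  assumes "set_functor Fobj Fmap" "t \<in> Fobj C"
  shows "t \<in> Fimg Fobj Fmap C C"
proof -
  have "Fmap C C id t = t" using assms unfolding set_functor_def by blast
  then show ?thesis using assms(2) unfolding Fimg_def by (metis image_eqI)
qed

lemma Fimg_Inter_supports:
  assumes "set_functor Fobj Fmap" "preserves_intersections Fobj Fmap" "t \<in> Fobj C"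
  shows "t \<in> Fimg Fobj Fmap (\<Inter>{Z. Z \<subseteq> C \<and> t \<in> Fimg Fobj Fmap Z C}) C"
proof -
  let ?supports = "{Z. Z \<subseteq> C \<and> t \<in> Fimg Fobj Fmap Z C}"
  have "C \<in> ?supports" using Fimg_self[OF assms(1,3)] by blast
  then have "Fimg Fobj Fmap (\<Inter>?supports) C = (\<Inter>Z\<in>?supports. Fimg Fobj Fmap Z C)"
    by (intro Fimg_Inter[OF assms(2)]) auto
  then show ?thesis by auto
qed

lemma tau_subset: "tau Fobj Fmap C t \<subseteq> C"
  unfolding tau_def by blast

lemma tau_eq_Inter_supports:
  assumes "set_functor Fobj Fmap" "preserves_intersections Fobj Fmap" "t \<in> Fobj C"
  shows "tau Fobj Fmap C t = \<Inter>{Z. Z \<subseteq> C \<and> t \<in> Fimg Fobj Fmap Z C}"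
proof (intro equalityI subsetI)
  fix x assume x: "x \<in> tau Fobj Fmap C t"
  show "x \<in> \<Inter>{Z. Z \<subseteq> C \<and> t \<in> Fimg Fobj Fmap Z C}"
  proof (intro InterI, clarify, rule ccontr)
    fix Z assume "Z \<subseteq> C" "t \<in> Fimg Fobj Fmap Z C" "x \<notin> Z"
    then have "t \<in> Fimg Fobj Fmap (C - {x}) C"
      using Fimg_mono[OF assms(2), of Z "C - {x}" C] by blast
    then show False using x unfolding tau_def by blast
  qed
next
  fix x assume x: "x \<in> \<Inter>{Z. Z \<subseteq> C \<and> t \<in> Fimg Fobj Fmap Z C}"
  then have "x \<in> C" using Fimg_self[OF assms(1,3)] by blast
  moreover have "t \<notin> Fimg Fobj Fmap (C - {x}) C" using x by blast
  ultimately show "x \<in> tau Fobj Fmap C t" unfolding tau_def by blast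
qed

lemma Fimg_iff_tau_subset:
  assumes "set_functor Fobj Fmap" "preserves_intersections Fobj Fmap"
    and "t \<in> Fobj C" "Z \<subseteq> C"
  shows "t \<in> Fimg Fobj Fmap Z C \<longleftrightarrow> tau Fobj Fmap C t \<subseteq> Z"
proof
  assume "t \<in> Fimg Fobj Fmap Z C"
  then show "tau Fobj Fmap C t \<subseteq> Z"
    using tau_eq_Inter_supports[OF assms(1-3)] assms(4) by blast
next
  assume "tau Fobj Fmap C t \<subseteq> Z"
  moreover have "t \<in> Fimg Fobj Fmap (tau Fobj Fmap C t) C"
    using Fimg_Inter_supports[OF assms(1-3)] tau_eq_Inter_supports[OF assms(1-3)] by simp
  ultimately show "t \<in> Fimg Fobj Fmap Z C"
    using Fimg_mono[OF assms(2) _ assms(4)] by blast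
qed

lemma ominus_eq_UN_tau:
  assumes sf: "set_functor Fobj Fmap" and pi: "preserves_intersections Fobj Fmap"
    and c: "c \<in> C \<rightarrow> Fobj C" and S: "S \<subseteq> C"
  shows "ominus Fobj Fmap C c S = (\<Union>s\<in>S. tau Fobj Fmap C (c s))"
  unfolding ominus_def
proof (rule Least_equality)
  let ?U = "\<Union>s\<in>S. tau Fobj Fmap C (c s)"
  have U: "?U \<subseteq> C" by (intro UN_least tau_subset)
  have factors_iff: "c s \<in> Fimg Fobj Fmap Z C \<longleftrightarrow> tau Fobj Fmap C (c s) \<subseteq> Z"
    if "s \<in> S" "Z \<subseteq> C" for s Z
  proof -
    have "c s \<in> Fobj C" using c S that(1) by blast
    then show ?thesis using Fimg_iff_tau_subset[OF sf pi _ that(2)] by simp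
  qed
  show "?U \<subseteq> C \<and> c ` S \<subseteq> Fimg Fobj Fmap ?U C"
  proof (intro conjI U image_subsetI)
    fix s assume s: "s \<in> S"
    then have "tau Fobj Fmap C (c s) \<subseteq> ?U" by blast
    then show "c s \<in> Fimg Fobj Fmap ?U C" using factors_iff[OF s U] by simp
  qed
  show "?U \<subseteq> Z" if Z: "Z \<subseteq> C \<and> c ` S \<subseteq> Fimg Fobj Fmap Z C" for Z
  proof (rule UN_least)
    fix s assume s: "s \<in> S"
    then have "c s \<in> Fimg Fobj Fmap Z C" using Z by blast
    then show "tau Fobj Fmap C (c s) \<subseteq> Z" using factors_iff[OF s] Z by simp
  qed
qed

lemma Fimg_Pobj: "Fimg Pobj Pmap Z C = Pow Z"
  unfolding Fimg_def Pobj_def Pmap_def by auto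

lemma ominus_Pobj_eq_UN:
  assumes "\<forall>s\<in>S. d s \<subseteq> C"
  shows "ominus Pobj Pmap C d S = (\<Union>s\<in>S. d s)"
  unfolding ominus_def Fimg_Pobj
proof (rule Least_equality)
  show "(\<Union>s\<in>S. d s) \<subseteq> C \<and> d ` S \<subseteq> Pow (\<Union>s\<in>S. d s)" using assms by blast
  show "(\<Union>s\<in>S. d s) \<subseteq> Z" if "Z \<subseteq> C \<and> d ` S \<subseteq> Pow Z" for Z using that by blast
qed

lemma ominus_eq_ominus_canonical_graph:
  assumes "set_functor Fobj Fmap" "preserves_intersections Fobj Fmap"
    and "c \<in> C \<rightarrow> Fobj C" "S \<subseteq> C"
  shows "ominus Fobj Fmap C c S = ominus Pobj Pmap C (\<lambda>x. tau Fobj Fmap C (c x)) S"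
proof -
  have "\<forall>s\<in>S. tau Fobj Fmap C (c s) \<subseteq> C" by (simp add: tau_subset)
  then show ?thesis using ominus_eq_UN_tau[OF assms] ominus_Pobj_eq_UN by metis
qed

lemma kstep_subset:
  assumes "set_functor Fobj Fmap" "preserves_intersections Fobj Fmap"
    and "c \<in> C \<rightarrow> Fobj C" "iC \<in> I \<rightarrow> C"
  shows "kstep Fobj Fmap C c I iC k \<subseteq> C"
proof (induction k)
  case 0
  then show ?case using assms(4) by auto
next
  case (Suc k)
  have "(\<Union>s\<in>kstep Fobj Fmap C c I iC k. tau Fobj Fmap C (c s)) \<subseteq> C"
    by (intro UN_least tau_subset)
  then show ?case using ominus_eq_UN_tau[OF assms(1-3) Suc] by simp
qed

theorem corollary5p26:
  fixes Fobj :: "'a set \<Rightarrow> 'b set"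
    and Fmap :: "'a set \<Rightarrow> 'a set \<Rightarrow> ('a \<Rightarrow> 'a) \<Rightarrow> 'b \<Rightarrow> 'b"
    and C :: "'a set" and c :: "'a \<Rightarrow> 'b" and I :: "'i set" and iC :: "'i \<Rightarrow> 'a"
  assumes "set_functor Fobj Fmap"
    and "preserves_intersections Fobj Fmap"
    and "c \<in> C \<rightarrow> Fobj C"
    and "iC \<in> I \<rightarrow> C"
  shows "\<forall>k. kstep Fobj Fmap C c I iC k = kstep Pobj Pmap C (\<lambda>x. tau Fobj Fmap C (c x)) I iC k"
proof
  fix k
  show "kstep Fobj Fmap C c I iC k = kstep Pobj Pmap C (\<lambda>x. tau Fobj Fmap C (c x)) I iC k"
  proof (induction k)
    case 0
    then show ?case by simp
  next
    case (Suc k)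
    have "kstep Fobj Fmap C c I iC (Suc k) = ominus Fobj Fmap C c (kstep Fobj Fmap C c I iC k)"
      by simp
    also have "\<dots> = ominus Pobj Pmap C (\<lambda>x. tau Fobj Fmap C (c x)) (kstep Fobj Fmap C c I iC k)"
      using ominus_eq_ominus_canonical_graph[OF assms(1-3) kstep_subset[OF assms]] .
    also have "\<dots> = kstep Pobj Pmap C (\<lambda>x. tau Fobj Fmap C (c x)) I iC (Suc k)"
      using Suc.IH by simp
    finally show ?case .
  qed
qed

end
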